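(* Let $N\ge 1$ be an integer and let $M$ be the set of pairs produced by the born-free matching algorithm for $N$. Then $M$ is a matching of the graph $G_N$ and $G_N$ contains no flat alternating cycle with respect to $M$.
   Context: For a positive integer $N$, let $G_N$ be the graph with vertex set $\{1,\dots,N\}$ in which $x$ and $y$ are adjacent iff $y=px$ or $x=py$ for some prime $p$. The rank of $n$ is $\Omega(n)$, the number of prime factors of $n$ counted with multiplicity. A matching is a set of edges no two sharing an endpoint. A cycle is alternating (with respect to a matching) if exactly every other edge of the cycle lies in the matching; it is flat if for some integer $k$ all its vertices have rank $k$ or $k+1$. For a prime $p$, let $S_p=\{(x,px): x\in\mathbb{N},\ px\le N\}$. The born-free matching algorithm for $N$: start with $M=\emptyset$; run through the primes $p\le N$ in descending order; for each such $p$, run through the pairs $(x,px)\in S_p$ in descending order of $x$, and add $(x,px)$ to $M$ whenever neither $x$ nor $px$ is an endpoint of a pair already in $M$. *)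

theory Defs
  imports "HOL-Computational_Algebra.Primes"
begin

definition G_adj :: "nat \<Rightarrow> nat \<Rightarrow> nat \<Rightarrow> bool" where
  "G_adj N x y \<longleftrightarrow> x \<in> {1..N} \<and> y \<in> {1..N} \<and>
     (\<exists>p::nat. prime p \<and> (y = p * x \<or> x = p * y))"

definition G_edges :: "nat \<Rightarrow> nat set set" where
  "G_edges N = {{x, y} | x y. G_adj N x y}"

definition rank :: "nat \<Rightarrow> nat" where
  "rank n = size (prime_factorization n)"

definition is_matching :: "nat set set \<Rightarrow> nat set set \<Rightarrow> bool" where
  "is_matching E M \<longleftrightarrow> M \<subseteq> E \<and> (\<forall>e\<in>M. \<forall>e'\<in>M. e \<noteq> e' \<longrightarrow> e \<inter> e' = {})"

definition cyc_edge :: "nat list \<Rightarrow> nat \<Rightarrow> nat set" where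
  "cyc_edge vs i = {vs ! i, vs ! ((i + 1) mod length vs)}"

definition is_cycle :: "nat \<Rightarrow> nat list \<Rightarrow> bool" where
  "is_cycle N vs \<longleftrightarrow> length vs \<ge> 3 \<and> distinct vs \<and>
     (\<forall>i < length vs. G_adj N (vs ! i) (vs ! ((i + 1) mod length vs)))"

definition alternating :: "nat set set \<Rightarrow> nat list \<Rightarrow> bool" where
  "alternating M vs \<longleftrightarrow>
     (\<forall>i < length vs. cyc_edge vs i \<in> M \<longleftrightarrow> cyc_edge vs ((i + 1) mod length vs) \<notin> M)"

definition flat :: "nat list \<Rightarrow> bool" where
  "flat vs \<longleftrightarrow> (\<exists>k. \<forall>v \<in> set vs. rank v = k \<or> rank v = k + 1)"

text \<open>Born-free matching algorithm. Candidate pairs (x, p x) in the order: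
  primes p <= N descending, and for each p, x descending.\<close>
definition bf_order :: "nat \<Rightarrow> (nat \<times> nat) list" where
  "bf_order N = concat (map (\<lambda>p. map (\<lambda>x. (x, p * x)) (rev [1..<N div p + 1]))
                          (rev (filter prime [1..<N + 1])))"

definition endpoints :: "(nat \<times> nat) set \<Rightarrow> nat set" where
  "endpoints M = fst ` M \<union> snd ` M"

definition bf_step :: "(nat \<times> nat) set \<Rightarrow> nat \<times> nat \<Rightarrow> (nat \<times> nat) set" where
  "bf_step M e = (if fst e \<notin> endpoints M \<and> snd e \<notin> endpoints M then insert e M else M)"

definition born_free :: "nat \<Rightarrow> (nat \<times> nat) set" where
  "born_free N = foldl bf_step {} (bf_order N)"

definition born_free_edges :: "nat \<Rightarrow> nat set set" where
  "born_free_edges N = (\<lambda>(x, y). {x, y}) ` born_free N"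

end

theory Submission
  imports Defs
begin

text \<open>A pair \<open>(y, q y)\<close> is skipped by the algorithm only if one of its endpoints is covered
  by a pair \<open>(x, p x)\<close> taken earlier, i.e. with \<open>q < p\<close>, or \<open>p = q\<close> and \<open>y < x\<close>.
  Along a flat cycle the rank goes up and down alternately, so in a flat alternating cycle the
  matched edges all point the same way. Since the primes of the upward steps and those of the
  downward steps have the same product, the largest prime \<open>P\<close> on the cycle also occurs on an
  unmatched edge \<open>{y, P y}\<close>. The pair that blocked it is a matched edge of the cycle, so its
  prime is at most \<open>P\<close>; hence it is \<open>(P y, P\<^sup>2 y)\<close>, and \<open>y\<close>, \<open>P\<^sup>2 y\<close> lie on the cycle
  with ranks differing by two, contradicting flatness.\<close>

lemma rank_prime_mult:
  assumes "prime (p::nat)" "0 < x"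
  shows "rank (p * x) = Suc (rank x)"
  using assms by (simp add: rank_def prime_factorization_times_prime)

lemma G_adj_prime_mult:
  assumes "prime p" "0 < x" "p * x \<le> N"
  shows "G_adj N x (p * x)"
proof -
  have "x \<le> p * x" using prime_gt_0_nat[OF assms(1)] by simp
  then have "x \<le> N" using assms(3) by linarith
  then show ?thesis using assms prime_gt_0_nat unfolding G_adj_def by (auto simp: Suc_le_eq)
qed

lemma G_adjE:
  assumes "G_adj N u w"
  obtains p x where "prime p" "0 < x" "p * x \<le> N" "{u, w} = {x, p * x}"
proof -
  obtain p where "prime p" "u \<in> {1..N}" "w \<in> {1..N}" "w = p * u \<or> u = p * w"
    using assms unfolding G_adj_def by blast
  then show thesis using that[of p u] that[of p w] by (auto simp: insert_commute)
qed

definition edge_prime :: "nat set \<Rightarrow> nat" where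
  "edge_prime e = Max e div Min e"

lemma edge_prime_prime_mult:
  assumes "prime p" "0 < x"
  shows "edge_prime {x, p * x} = p"
proof -
  have "x < p * x" using assms prime_gt_1_nat by simp
  then show ?thesis using assms by (simp add: edge_prime_def max_def min_def)
qed

lemma set_bf_order:
  "set (bf_order N) = {(x, p * x) | p x. prime p \<and> 0 < x \<and> p * x \<le> N}"
  (is "_ = ?pairs")
proof -
  have le_div: "x \<le> N div p \<longleftrightarrow> p * x \<le> N" if "prime p" for p x :: nat
    using prime_gt_0_nat[OF that] less_eq_div_iff_mult_less_eq[of p x N] by (simp add: mult.commute)
  show ?thesis
  proof (intro set_eqI iffI)
    fix e assume "e \<in> set (bf_order N)"
    then obtain p x where "prime p" "1 \<le> x" "x \<le> N div p" "e = (x, p * x)"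
      by (auto simp: bf_order_def simp del: upt_Suc)
    then show "e \<in> ?pairs" using le_div by auto
  next
    fix e assume "e \<in> ?pairs"
    then obtain p x where px: "prime p" "0 < x" "p * x \<le> N" "e = (x, p * x)" by blast
    have "p \<le> p * x" using px(2) by simp
    then have "p \<le> N" using px(3) by linarith
    then have p_in: "p \<in> set (rev (filter prime [1..<N + 1]))"
      using px prime_gt_0_nat[OF px(1)] by (simp del: upt_Suc)
    have "x \<le> N div p" using px le_div by blast
    then have "x \<in> set (rev [1..<N div p + 1])" using px(2) by (simp del: upt_Suc)
    then have "e \<in> set (map (\<lambda>x. (x, p * x)) (rev [1..<N div p + 1]))"
      unfolding set_map px(4) by (rule imageI)
    with p_in show "e \<in> set (bf_order N)" unfolding bf_order_def by auto
  qed
qed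

text \<open>\<open>(x, p x)\<close> comes before \<open>(x', p' x')\<close> iff \<open>p' < p\<close>, or \<open>p' = p\<close> and \<open>x' < x\<close>.\<close>
definition bf_before :: "nat \<times> nat \<Rightarrow> nat \<times> nat \<Rightarrow> bool" where
  "bf_before e e' \<longleftrightarrow> snd e' div fst e' < snd e div fst e \<or>
     (snd e div fst e = snd e' div fst e' \<and> fst e' < fst e)"

lemma sorted_bf_order: "sorted_wrt bf_before (bf_order N)"
proof -
  define pairs where "pairs p = map (\<lambda>x. (x, p * x)) (rev [1..<N div p + 1])" for p
  have pairs_ratio: "snd e div fst e = p" if "prime p" "e \<in> set (pairs p)" for p e
    using that by (auto simp: pairs_def)
  have "sorted_wrt bf_before (concat (map pairs ps))"
    if "sorted_wrt (>) ps" "\<forall>p\<in>set ps. prime p" for ps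
    using that
  proof (induction ps)
    case Nil
    then show ?case by simp
  next
    case (Cons p ps)
    have "sorted_wrt (\<lambda>x y. bf_before (x, p * x) (y, p * y)) (rev [1..<N div p + 1])"
      unfolding sorted_wrt_rev
      by (rule sorted_wrt_mono_rel[OF _ sorted_wrt_upt]) (auto simp: bf_before_def)
    then have "sorted_wrt bf_before (pairs p)" by (simp add: pairs_def sorted_wrt_map)
    moreover have "bf_before e e'"
      if e: "e \<in> set (pairs p)" and e': "e' \<in> set (concat (map pairs ps))" for e e'
    proof -
      obtain p' where "p' \<in> set ps" "e' \<in> set (pairs p')" using e' by auto
      then show ?thesis
        using Cons.prems e pairs_ratio[of p e] pairs_ratio[of p' e'] by (auto simp: bf_before_def)
    qed
    ultimately show ?case using Cons by (simp add: sorted_wrt_append)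
  qed
  moreover have "sorted_wrt (>) (rev (filter prime [1..<N + 1]))"
    unfolding sorted_wrt_rev by (intro sorted_wrt_filter sorted_wrt_upt)
  ultimately show ?thesis unfolding bf_order_def pairs_def[symmetric] by simp
qed

definition edge_of :: "nat \<times> nat \<Rightarrow> nat set" where
  "edge_of e = {fst e, snd e}"

lemma endpoints_iff: "v \<in> endpoints M \<longleftrightarrow> (\<exists>e\<in>M. v \<in> edge_of e)"
  by (force simp: endpoints_def edge_of_def)

lemma bf_step_mono: "M \<subseteq> bf_step M e"
  by (auto simp: bf_step_def)

lemma foldl_bf_step_subset: "foldl bf_step M L \<subseteq> M \<union> set L"
proof (induction L arbitrary: M)
  case Nil
  then show ?case by simp
next
  case (Cons e L)
  have "bf_step M e \<subseteq> insert e M" by (auto simp: bf_step_def)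
  then show ?case using Cons.IH[of "bf_step M e"] by auto
qed

lemma bf_step_pairwise_disjnt:
  assumes "pairwise (\<lambda>e e'. disjnt (edge_of e) (edge_of e')) M"
  shows "pairwise (\<lambda>e e'. disjnt (edge_of e) (edge_of e')) (bf_step M e)"
proof (cases "fst e \<notin> endpoints M \<and> snd e \<notin> endpoints M")
  case True
  then have "disjnt (edge_of e) (edge_of e')" if "e' \<in> M" for e'
    using that by (auto simp: endpoints_iff edge_of_def disjnt_def)
  then show ?thesis using True assms by (simp add: bf_step_def pairwise_insert disjnt_sym)
next
  case False
  then show ?thesis using assms by (auto simp: bf_step_def)
qed

lemma foldl_bf_step_pairwise_disjnt:
  assumes "pairwise (\<lambda>e e'. disjnt (edge_of e) (edge_of e')) M"
  shows "pairwise (\<lambda>e e'. disjnt (edge_of e) (edge_of e')) (foldl bf_step M L)"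
  using assms by (induction L arbitrary: M) (simp_all add: bf_step_pairwise_disjnt)

lemma foldl_bf_step_blocked:
  assumes "sorted_wrt R L" "e \<in> set L" "e \<notin> foldl bf_step {} L"
  shows "\<exists>e'\<in>foldl bf_step {} L. R e' e \<and> \<not> disjnt (edge_of e') (edge_of e)"
  using assms
proof (induction L rule: rev_induct)
  case Nil
  then show ?case by simp
next
  case (snoc d L)
  let ?M = "foldl bf_step {} L"
  have M_sub: "?M \<subseteq> foldl bf_step {} (L @ [d])" by (simp add: bf_step_mono)
  show ?case
  proof (cases "e = d")
    case True
    have "d \<notin> bf_step ?M d" using snoc.prems(3) True by simp
    then have "fst e \<in> endpoints ?M \<or> snd e \<in> endpoints ?M"
      using True unfolding bf_step_def by (auto split: if_splits)
    then obtain e' where "e' \<in> ?M" "\<not> disjnt (edge_of e') (edge_of e)"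
      by (auto simp: endpoints_iff edge_of_def disjnt_def)
    moreover have "e' \<in> set L" using \<open>e' \<in> ?M\<close> foldl_bf_step_subset[of "{}" L] by auto
    ultimately show ?thesis using True snoc.prems(1) M_sub by (auto simp: sorted_wrt_append)
  next
    case False
    then have "e \<notin> ?M" using snoc.prems(3) M_sub by blast
    then have "\<exists>e'\<in>?M. R e' e \<and> \<not> disjnt (edge_of e') (edge_of e)"
      using False snoc by (auto simp: sorted_wrt_append)
    then show ?thesis using M_sub by blast
  qed
qed

lemma born_free_pair:
  assumes "e \<in> born_free N"
  obtains p x where "prime p" "0 < x" "p * x \<le> N" "e = (x, p * x)"
  using assms foldl_bf_step_subset[of "{}" "bf_order N"]
  unfolding born_free_def set_bf_order by blast

lemma born_free_edges_eq: "born_free_edges N = edge_of ` born_free N"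
  unfolding born_free_edges_def edge_of_def by (auto simp: case_prod_beta)

lemma born_free_pair_mem_edges: "(x, y) \<in> born_free N \<Longrightarrow> {x, y} \<in> born_free_edges N"
  by (force simp: born_free_edges_def)

lemma born_free_is_matching: "is_matching (G_edges N) (born_free_edges N)"
  unfolding is_matching_def
proof (intro conjI subsetI ballI impI)
  fix s assume "s \<in> born_free_edges N"
  then obtain e where "e \<in> born_free N" "s = edge_of e" by (auto simp: born_free_edges_eq)
  then obtain p x where "prime p" "0 < x" "p * x \<le> N" "s = {x, p * x}"
    by (auto simp: edge_of_def elim: born_free_pair)
  then show "s \<in> G_edges N" unfolding G_edges_def using G_adj_prime_mult by blast
next
  fix s s' assume "s \<in> born_free_edges N" "s' \<in> born_free_edges N" "s \<noteq> s'"
  then obtain e e' where "e \<in> born_free N" "e' \<in> born_free N" "e \<noteq> e'"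
      "s = edge_of e" "s' = edge_of e'"
    by (auto simp: born_free_edges_eq)
  moreover have "pairwise (\<lambda>e e'. disjnt (edge_of e) (edge_of e')) (born_free N)"
    unfolding born_free_def by (rule foldl_bf_step_pairwise_disjnt) simp
  ultimately show "s \<inter> s' = {}" by (simp add: pairwise_def disjnt_def)
qed

lemma born_free_blocked:
  assumes "prime q" "0 < y" "q * y \<le> N" "(y, q * y) \<notin> born_free N"
  obtains p x where "(x, p * x) \<in> born_free N" "prime p" "0 < x"
    "\<not> disjnt {x, p * x} {y, q * y}" "q < p \<or> p = q \<and> y < x"
proof -
  have "(y, q * y) \<in> set (bf_order N)" using assms by (auto simp: set_bf_order)
  then obtain e where e: "e \<in> born_free N" "bf_before e (y, q * y)"
      "\<not> disjnt (edge_of e) {y, q * y}"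
    using foldl_bf_step_blocked[OF sorted_bf_order] assms(4)
    unfolding born_free_def edge_of_def by fastforce
  then obtain p x where px: "prime p" "0 < x" "e = (x, p * x)" by (auto elim: born_free_pair)
  have "q * y div y = q" "p * x div x = p" using assms(2) px(2) by auto
  then show thesis using that[of x p] e px unfolding bf_before_def edge_of_def by auto
qed

lemma prod_lessThan_Suc_mod:
  "(\<Prod>i<n. f (Suc i mod n)) = (\<Prod>i<n. f i :: 'a::comm_monoid_mult)"
proof (cases n)
  case 0
  then show ?thesis by simp
next
  case (Suc m)
  have "(\<Prod>i<Suc m. f (Suc i mod Suc m)) = (\<Prod>i<m. f (Suc i mod Suc m)) * f 0"
    by (simp add: prod.lessThan_Suc)
  also have "(\<Prod>i<m. f (Suc i mod Suc m)) = (\<Prod>i<m. f (Suc i))"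
    by (rule prod.cong) auto
  also have "(\<Prod>i<m. f (Suc i)) * f 0 = (\<Prod>i<Suc m. f i)"
    by (simp only: prod.lessThan_Suc_shift mult.commute)
  finally show ?thesis using Suc by simp
qed

lemma prime_dvd_prod_primesE:
  fixes r :: "'a \<Rightarrow> nat"
  assumes "prime p" "finite A" "\<And>j. j \<in> A \<Longrightarrow> prime (r j)" "p dvd (\<Prod>j\<in>A. r j)"
  obtains j where "j \<in> A" "r j = p"
  using assms by (metis prime_dvd_prod_iff primes_dvd_imp_eq)

text \<open>The product of the primes of the ascending steps equals that of the descending steps,
  since both telescope around the cycle.\<close>
lemma cyclic_prime_steps_balanced:
  fixes a r :: "nat \<Rightarrow> nat"
  assumes step: "\<And>j. j < n \<Longrightarrow> 0 < a j \<and> prime (r j) \<and>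
      (a (Suc j mod n) = r j * a j \<or> a j = r j * a (Suc j mod n))"
    and i: "i < n"
  obtains j where "j < n" "r j = r i" "a j < a (Suc j mod n) \<longleftrightarrow> \<not> a i < a (Suc i mod n)"
proof -
  define up where "up j \<longleftrightarrow> a j < a (Suc j mod n)" for j
  define U where "U = {j \<in> {..<n}. up j}"
  define D where "D = {j \<in> {..<n}. \<not> up j}"
  have step_eq: "a j * (if up j then r j else 1) = a (Suc j mod n) * (if \<not> up j then r j else 1)"
    if "j < n" for j
  proof -
    have "2 \<le> r j" "0 < a j" using step[OF that] prime_ge_2_nat by auto
    then have "a j < r j * a j" "a (Suc j mod n) \<le> r j * a (Suc j mod n)" by simp_all
    then show ?thesis using step[OF that] by (auto simp: up_def)
  qed
  have "(\<Prod>j<n. a j) * (\<Prod>j\<in>U. r j) = (\<Prod>j<n. a j * (if up j then r j else 1))"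
    by (simp only: U_def prod.inter_filter[OF finite_lessThan] prod.distrib)
  also have "\<dots> = (\<Prod>j<n. a (Suc j mod n) * (if \<not> up j then r j else 1))"
    by (rule prod.cong) (simp_all add: step_eq)
  also have "\<dots> = (\<Prod>j<n. a (Suc j mod n)) * (\<Prod>j\<in>D. r j)"
    by (simp only: D_def prod.inter_filter[OF finite_lessThan] prod.distrib)
  also have "(\<Prod>j<n. a (Suc j mod n)) = (\<Prod>j<n. a j)"
    by (rule prod_lessThan_Suc_mod)
  finally have "(\<Prod>j<n. a j) * (\<Prod>j\<in>U. r j) = (\<Prod>j<n. a j) * (\<Prod>j\<in>D. r j)" .
  moreover have "0 < (\<Prod>j<n. a j)" using step by (intro prod_pos) simp
  ultimately have balanced: "(\<Prod>j\<in>U. r j) = (\<Prod>j\<in>D. r j)"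
    using nat_mult_eq_cancel1 by blast
  have primes: "prime (r i)" "\<And>j. j \<in> U \<union> D \<Longrightarrow> prime (r j)"
    using step i by (auto simp: U_def D_def)
  have finite: "finite U" "finite D" by (simp_all add: U_def D_def)
  show thesis
  proof (cases "up i")
    case True
    then have dvd: "r i dvd (\<Prod>j\<in>D. r j)" unfolding balanced[symmetric] using i
      by (intro dvd_prodI) (simp_all add: U_def)
    obtain j where "j \<in> D" "r j = r i"
      using prime_dvd_prod_primesE[OF primes(1) finite(2) _ dvd] primes(2) by blast
    then show thesis using that True by (auto simp: D_def up_def)
  next
    case False
    then have dvd: "r i dvd (\<Prod>j\<in>U. r j)" unfolding balanced using i
      by (intro dvd_prodI) (simp_all add: D_def)
    obtain j where "j \<in> U" "r j = r i"
      using prime_dvd_prod_primesE[OF primes(1) finite(1) _ dvd] primes(2) by blast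
    then show thesis using that False by (auto simp: U_def up_def)
  qed
qed

lemma cyclic_invariant_const:
  assumes "\<And>j. j < n \<Longrightarrow> f (Suc j mod n) = f j" "i < n"
  shows "f i = f 0"
  using assms(2)
proof (induction i)
  case 0
  then show ?case by simp
next
  case (Suc i)
  then have "Suc i mod n = Suc i" by simp
  then show ?case using assms(1)[of i] Suc by simp
qed

lemma Suc_mod_less: "i < n \<Longrightarrow> Suc i mod n < n"
  by (intro mod_less_divisor) linarith

lemma cyc_edge_subset: "i < length vs \<Longrightarrow> cyc_edge vs i \<subseteq> set vs"
  using Suc_mod_less[of i "length vs"] by (simp add: cyc_edge_def)

lemma cycle_edge:
  assumes "is_cycle N vs" "i < length vs"
  obtains p x where "prime p" "0 < x" "p * x \<le> N" "cyc_edge vs i = {x, p * x}"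
proof -
  have "G_adj N (vs ! i) (vs ! (Suc i mod length vs))"
    using assms unfolding is_cycle_def by simp
  then show thesis using that unfolding cyc_edge_def by (auto elim: G_adjE)
qed

lemma cycle_prime_step:
  assumes "is_cycle N vs" "i < length vs"
  shows "0 < vs ! i \<and> prime (edge_prime (cyc_edge vs i)) \<and>
    (vs ! (Suc i mod length vs) = edge_prime (cyc_edge vs i) * vs ! i \<or>
     vs ! i = edge_prime (cyc_edge vs i) * vs ! (Suc i mod length vs))"
proof -
  obtain p x where px: "prime p" "0 < x" "cyc_edge vs i = {x, p * x}"
    using cycle_edge[OF assms] by metis
  then have "edge_prime (cyc_edge vs i) = p" by (simp add: edge_prime_prime_mult)
  moreover have "{vs ! i, vs ! (Suc i mod length vs)} = {x, p * x}"
    using px(3) by (simp add: cyc_edge_def)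
  ultimately show ?thesis using px prime_gt_0_nat[OF px(1)] by (auto simp: doubleton_eq_iff)
qed

lemma cycle_rank_step:
  assumes "is_cycle N vs" "i < length vs"
  shows "if vs ! i < vs ! (Suc i mod length vs)
    then rank (vs ! (Suc i mod length vs)) = Suc (rank (vs ! i))
    else rank (vs ! i) = Suc (rank (vs ! (Suc i mod length vs)))"
proof -
  obtain p x where px: "prime p" "0 < x" "cyc_edge vs i = {x, p * x}"
    using cycle_edge[OF assms] by metis
  then have "{vs ! i, vs ! (Suc i mod length vs)} = {x, p * x}"
    by (simp add: cyc_edge_def)
  moreover have "x < p * x" using px prime_gt_1_nat by simp
  ultimately show ?thesis using rank_prime_mult[OF px(1,2)] by (auto simp: doubleton_eq_iff)
qed

lemma flat_cycle_ascending_alternates: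
  assumes "is_cycle N vs" "flat vs" "i < length vs"
  shows "vs ! (Suc i mod length vs) < vs ! (Suc (Suc i mod length vs) mod length vs) \<longleftrightarrow>
    \<not> vs ! i < vs ! (Suc i mod length vs)"
proof -
  define i' where "i' = Suc i mod length vs"
  have i': "i' < length vs" using assms(3) by (simp add: i'_def Suc_mod_less)
  obtain k where "\<forall>v \<in> set vs. rank v = k \<or> rank v = k + 1"
    using assms(2) unfolding flat_def by blast
  then have "rank (vs ! i) \<in> {k, Suc k}" "rank (vs ! i') \<in> {k, Suc k}"
      "rank (vs ! (Suc i' mod length vs)) \<in> {k, Suc k}"
    using assms(3) i' Suc_mod_less[OF i'] by auto
  then show ?thesis
    using cycle_rank_step[OF assms(1,3)] cycle_rank_step[OF assms(1) i']
    unfolding i'_def by (auto split: if_splits)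
qed

lemma flat_alternating_cycle_matched_iff_ascending:
  assumes "is_cycle N vs" "flat vs" "alternating M vs" "i < length vs"
  shows "(cyc_edge vs i \<in> M \<longleftrightarrow> vs ! i < vs ! (Suc i mod length vs)) \<longleftrightarrow>
    (cyc_edge vs 0 \<in> M \<longleftrightarrow> vs ! 0 < vs ! (Suc 0 mod length vs))"
proof (rule cyclic_invariant_const[OF _ assms(4),
    where f = "\<lambda>j. cyc_edge vs j \<in> M \<longleftrightarrow> vs ! j < vs ! (Suc j mod length vs)"])
  fix j assume "j < length vs"
  then show "(cyc_edge vs (Suc j mod length vs) \<in> M \<longleftrightarrow>
      vs ! (Suc j mod length vs) < vs ! (Suc (Suc j mod length vs) mod length vs)) \<longleftrightarrow>
    (cyc_edge vs j \<in> M \<longleftrightarrow> vs ! j < vs ! (Suc j mod length vs))"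
    using assms(3) flat_cycle_ascending_alternates[OF assms(1,2)] unfolding alternating_def by auto
qed

lemma flat_alternating_cycle_unmatched_edge:
  assumes "is_cycle N vs" "flat vs" "alternating M vs" "i < length vs"
  obtains j where "j < length vs" "edge_prime (cyc_edge vs j) = edge_prime (cyc_edge vs i)"
    "cyc_edge vs j \<notin> M"
proof (cases "cyc_edge vs i \<in> M")
  case False
  then show thesis using that assms(4) by blast
next
  case True
  obtain j where "j < length vs" "edge_prime (cyc_edge vs j) = edge_prime (cyc_edge vs i)"
    "vs ! j < vs ! (Suc j mod length vs) \<longleftrightarrow> \<not> vs ! i < vs ! (Suc i mod length vs)"
    using cyclic_prime_steps_balanced[where a = "(!) vs"
        and r = "\<lambda>j. edge_prime (cyc_edge vs j)"] cycle_prime_step[OF assms(1)] assms(4)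
    by metis
  then show thesis
    using that True flat_alternating_cycle_matched_iff_ascending[OF assms(1-3)] assms(4) by metis
qed

text \<open>Alternation forces one of the two cycle edges at each cycle vertex into the matching.\<close>
lemma alternating_matching_edge_at_cycle_vertex:
  assumes "is_matching E M" "alternating M vs" "e \<in> M" "v \<in> e" "v \<in> set vs"
  obtains j where "j < length vs" "e = cyc_edge vs j"
proof -
  define n where "n = length vs"
  obtain k where k: "k < n" "vs ! k = v" using assms(5) by (auto simp: n_def in_set_conv_nth)
  define h where "h = (k + n - 1) mod n"
  have h: "h < n" "Suc h mod n = k" using k(1) by (auto simp: h_def mod_Suc_eq)
  then have "cyc_edge vs h \<in> M \<or> cyc_edge vs k \<in> M"
    using assms(2) unfolding alternating_def n_def by auto
  moreover have "v \<in> cyc_edge vs h" "v \<in> cyc_edge vs k"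
    using h k by (auto simp: cyc_edge_def n_def)
  ultimately obtain j where "j < n" "cyc_edge vs j \<in> M" "v \<in> cyc_edge vs j"
    using h(1) k(1) by blast
  then have "e = cyc_edge vs j" using assms(1,3,4) unfolding is_matching_def by blast
  then show thesis using that \<open>j < n\<close> n_def by blast
qed

lemma flat_prime_square_mult_not_mem:
  assumes "flat vs" "prime q" "0 < y" "y \<in> set vs"
  shows "q * (q * y) \<notin> set vs"
proof
  assume "q * (q * y) \<in> set vs"
  moreover obtain k where "\<forall>v \<in> set vs. rank v = k \<or> rank v = k + 1"
    using assms(1) unfolding flat_def by blast
  ultimately have "rank (q * (q * y)) \<in> {k, Suc k}" "rank y \<in> {k, Suc k}" using assms(4) by auto
  moreover have "rank (q * (q * y)) = Suc (Suc (rank y))"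
    using assms(2,3) by (simp add: rank_prime_mult prime_gt_0_nat)
  ultimately show False by auto
qed

lemma born_free_no_flat_alternating_cycle:
  assumes cyc: "is_cycle N vs" and alt: "alternating (born_free_edges N) vs" and fl: "flat vs"
  shows False
proof -
  define n where "n = length vs"
  define r where "r j = edge_prime (cyc_edge vs j)" for j
  define P where "P = Max (r ` {..<n})"
  have "0 < n" using cyc unfolding is_cycle_def n_def by linarith
  then have "P \<in> r ` {..<n}" unfolding P_def by (intro Max_in) auto
  then obtain i0 where "i0 < n" "r i0 = P" by auto
  then obtain i where i: "i < n" "r i = P" "cyc_edge vs i \<notin> born_free_edges N"
    using flat_alternating_cycle_unmatched_edge[OF cyc fl alt] unfolding n_def r_def by metis
  then obtain q y where "prime q" "0 < y" "q * y \<le> N" and edge_i: "cyc_edge vs i = {y, q * y}"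
    using cycle_edge[OF cyc] n_def by metis
  have "q = P" using i(2) edge_i by (simp add: r_def edge_prime_prime_mult \<open>prime q\<close> \<open>0 < y\<close>)
  have "(y, q * y) \<notin> born_free N" using i(3) edge_i born_free_pair_mem_edges by auto
  then obtain p x where blocker: "(x, p * x) \<in> born_free N" "prime p" "0 < x"
      "\<not> disjnt {x, p * x} {y, q * y}" "q < p \<or> p = q \<and> y < x"
    using born_free_blocked \<open>prime q\<close> \<open>0 < y\<close> \<open>q * y \<le> N\<close> by metis
  then obtain v where v: "v \<in> {x, p * x}" "v \<in> {y, q * y}" by (auto simp: disjnt_def)
  have "{x, p * x} \<in> born_free_edges N" using blocker(1) by (rule born_free_pair_mem_edges)
  moreover have "v \<in> set vs" using v(2) edge_i cyc_edge_subset i(1) n_def by blast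
  ultimately obtain j where j: "j < n" "{x, p * x} = cyc_edge vs j"
    using alternating_matching_edge_at_cycle_vertex[OF born_free_is_matching alt _ v(1)] n_def
    by metis
  have "p = r j"
    unfolding r_def j(2)[symmetric] using blocker(2,3) by (rule edge_prime_prime_mult[symmetric])
  also have "r j \<le> P" unfolding P_def using j(1) by (intro Max_ge) auto
  finally have "p = q" "y < x" using blocker(5) \<open>q = P\<close> by auto
  have "y < q * y" "x < q * x" using \<open>prime q\<close> \<open>0 < x\<close> \<open>0 < y\<close> prime_gt_1_nat by simp_all
  then have "x = q * y" using v \<open>p = q\<close> \<open>y < x\<close> by auto
  have "q * (q * y) \<in> cyc_edge vs j" using j(2) \<open>p = q\<close> \<open>x = q * y\<close> by auto
  then have "q * (q * y) \<in> set vs" using cyc_edge_subset j(1) n_def by blast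
  moreover have "y \<in> set vs" using edge_i cyc_edge_subset i(1) n_def by blast
  ultimately show False using flat_prime_square_mult_not_mem[OF fl \<open>prime q\<close> \<open>0 < y\<close>] by blast
qed

theorem theorem3:
  fixes N :: nat
  assumes "N \<ge> 1"
  shows "is_matching (G_edges N) (born_free_edges N) \<and>
         \<not> (\<exists>vs. is_cycle N vs \<and> alternating (born_free_edges N) vs \<and> flat vs)"
  using born_free_is_matching born_free_no_flat_alternating_cycle by blast

end
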